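(* Let $(A,B)$ with $A\in\mathbb{R}^{n\times n}$, $B\in\mathbb{R}^{n\times r}$ be a controllable pair with controllability index $m$. Then for each real matrix $M\in\mathbb{R}^{n\times n}$, the pair $(M+gA,B)$ is controllable with controllability index no greater than $m$ for all but at most finitely many values of the real scalar $g$. Moreover, if $mr=n$, then $m$ is the controllability index of $(M+gA,B)$ for all but finitely many values of $g$.
   Context: The controllability index of a controllable pair $(A,B)$ is the smallest $k$ with $\mathrm{rank}[B\ AB\ \cdots\ A^{k-1}B]=n$. *)

theory Defs
  imports "HOL-Analysis.Analysis"
begin

text \<open>Matrix power (the componentwise ring structure on vec is not matrix multiplication).\<close>
fun matpow :: "real^'n^'n \<Rightarrow> nat \<Rightarrow> real^'n^'n" where
  "matpow A 0 = mat 1"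
| "matpow A (Suc k) = A ** matpow A k"

text \<open>Rank of the Kalman matrix [B AB ... A^(k-1)B], i.e. the dimension of its column space,
  which is spanned by the columns of the blocks A^i B, i < k.\<close>
definition kalman_rank :: "real^'n^'n \<Rightarrow> real^'r^'n \<Rightarrow> nat \<Rightarrow> nat" where
  "kalman_rank A B k = dim (\<Union>i<k. columns (matpow A i ** B))"

definition controllable :: "real^'n^'n \<Rightarrow> real^'r^'n \<Rightarrow> bool" where
  "controllable A B \<longleftrightarrow> (\<exists>k. kalman_rank A B k = CARD('n))"

definition ctrb_index :: "real^'n^'n \<Rightarrow> real^'r^'n \<Rightarrow> nat" where
  "ctrb_index A B = (LEAST k. kalman_rank A B k = CARD('n))"

end

theory Submission
  imports Defs
begin

text \<open>Pick \<open>n\<close> linearly independent columns of the Kalman matrix \<open>[B AB \<dots> A^(m-1)B]\<close>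
  of \<open>(A, B)\<close>. The same selection of columns of the Kalman matrix of the pencil \<open>xM + A\<close>
  gives a square matrix whose determinant \<open>p(x)\<close> is a polynomial in \<open>x\<close> with \<open>p(0) \<noteq> 0\<close>,
  so it vanishes for only finitely many \<open>x\<close>. Since \<open>xM + A = x(M + gA)\<close> for \<open>x = 1/g\<close>, and
  scaling the matrix only rescales each selected column by a nonzero power of \<open>x\<close>, the pair
  \<open>(M + gA, B)\<close> has full Kalman rank at \<open>m\<close> for all but finitely many \<open>g\<close>. When \<open>mr = n\<close>,
  no fewer than \<open>m\<close> blocks of \<open>r\<close> columns can span \<open>\<real>\<^sup>n\<close>, so the index is exactly \<open>m\<close>.\<close>

lemma real_polynomial_function_finite_zeros:
  fixes f :: "real \<Rightarrow> real"
  assumes "real_polynomial_function f" and "f a \<noteq> 0"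
  shows "finite {x. f x = 0}"
proof -
  obtain c n where f: "f = (\<lambda>x. \<Sum>i\<le>n. c i * x ^ i)"
    using assms(1) real_polynomial_function_iff_sum by blast
  have "\<exists>i\<le>n. c i \<noteq> 0"
    using assms(2) unfolding f by (metis (no_types, lifting) mult_eq_0_iff sum.neutral atMost_iff)
  then show ?thesis
    unfolding f using polyfun_finite_roots by blast
qed

lemma real_polynomial_function_det:
  fixes X :: "real \<Rightarrow> real^'n^'n"
  assumes "\<And>i j. real_polynomial_function (\<lambda>x. X x $ i $ j)"
  shows "real_polynomial_function (\<lambda>x. det (X x))"
  unfolding det_def by (intro real_polynomial_function_sum real_polynomial_function_prod
      real_polynomial_function.intros assms finite_permutations) auto

lemma real_polynomial_function_matrix_mult:
  fixes X :: "real \<Rightarrow> real^'m^'n" and Y :: "real \<Rightarrow> real^'k^'m"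
  assumes "\<And>i j. real_polynomial_function (\<lambda>x. X x $ i $ j)"
    and "\<And>i j. real_polynomial_function (\<lambda>x. Y x $ i $ j)"
  shows "real_polynomial_function (\<lambda>x. (X x ** Y x) $ i $ j)"
  unfolding matrix_matrix_mult_def
  by (simp, intro real_polynomial_function_sum real_polynomial_function.intros(4) assms) auto

lemma real_polynomial_function_matpow:
  fixes X :: "real \<Rightarrow> real^'n^'n"
  assumes "\<And>i j. real_polynomial_function (\<lambda>x. X x $ i $ j)"
  shows "real_polynomial_function (\<lambda>x. matpow (X x) k $ i $ j)"
proof (induction k arbitrary: i j)
  case 0
  show ?case by (simp add: real_polynomial_function.intros(2))
next
  case (Suc k)
  then show ?case by (simp add: assms real_polynomial_function_matrix_mult)
qed

lemma real_polynomial_function_pencil_entry: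
  fixes M A :: "real^'n^'n"
  shows "real_polynomial_function (\<lambda>x. (x *\<^sub>R M + A) $ i $ j)"
  by (simp, intro real_polynomial_function.intros bounded_linear_ident)

lemma matpow_scaleR:
  fixes X :: "real^'n^'n"
  shows "matpow (c *\<^sub>R X) k = c ^ k *\<^sub>R matpow X k"
  by (induction k) (simp_all add: scalar_matrix_assoc[symmetric] matrix_scalar_ac)

lemma obtain_nonsingular_matrix_with_columns_in:
  fixes S :: "(real^'n) set"
  assumes "dim S = CARD('n)"
  obtains Q :: "real^'n^'n" where "columns Q \<subseteq> S" and "det Q \<noteq> 0"
proof -
  obtain C where C: "C \<subseteq> S" "independent C" "card C = CARD('n)"
    using basis_exists[of S] assms by metis
  then obtain f where f: "bij_betw f (UNIV::'n set) C"
    using finite_same_card_bij[of "UNIV::'n set" C] by (metis card_gt_0_iff zero_less_card_finite)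
  define Q :: "real^'n^'n" where "Q = (\<chi> a k. f k $ a)"
  have "columns Q = C"
    using f unfolding Q_def columns_def column_def bij_betw_def by auto
  moreover have "dim C = CARD('n)"
    using basis_card_eq_dim[OF order_refl span_superset C(2)] C(3) by simp
  ultimately have "rank Q = CARD('n)" by (simp add: column_rank_def)
  then have "det Q \<noteq> 0" by (simp add: det_eq_0_rank)
  with \<open>columns Q = C\<close> C(1) show thesis using that by blast
qed

definition kalman_submatrix :: "real^'n^'n \<Rightarrow> real^'r^'n \<Rightarrow> ('k \<Rightarrow> nat \<times> 'r) \<Rightarrow> real^'k^'n" where
  "kalman_submatrix X B h = (\<chi> a k. (matpow X (fst (h k)) ** B) $ a $ snd (h k))"

lemma column_kalman_submatrix:
  "column k (kalman_submatrix X B h) = column (snd (h k)) (matpow X (fst (h k)) ** B)"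
  unfolding kalman_submatrix_def column_def by simp

lemma kalman_submatrix_scaleR:
  "kalman_submatrix (c *\<^sub>R X) B h =
     kalman_submatrix X B h ** (\<chi> i j. if i = j then c ^ fst (h j) else 0)"
  by (simp add: kalman_submatrix_def matrix_matrix_mult_def matpow_scaleR vec_eq_iff
      scalar_matrix_assoc[symmetric] if_distrib sum_distrib_left sum_distrib_right mult_ac cong: if_cong)

lemma det_kalman_submatrix_scaleR:
  fixes B :: "real^'r^'n" and h :: "'n \<Rightarrow> nat \<times> 'r"
  shows "det (kalman_submatrix (c *\<^sub>R X) B h) = det (kalman_submatrix X B h) * (\<Prod>k\<in>UNIV. c ^ fst (h k))"
  unfolding kalman_submatrix_scaleR det_mul by (subst det_diagonal) auto

lemma obtain_nonsingular_kalman_submatrix: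
  fixes A :: "real^'n^'n" and B :: "real^'r^'n"
  assumes "kalman_rank A B m = CARD('n)"
  obtains h :: "'n \<Rightarrow> nat \<times> 'r" where "\<And>k. fst (h k) < m" and "det (kalman_submatrix A B h) \<noteq> 0"
proof -
  obtain Q :: "real^'n^'n" where Q: "columns Q \<subseteq> (\<Union>i<m. columns (matpow A i ** B))" "det Q \<noteq> 0"
    using obtain_nonsingular_matrix_with_columns_in assms unfolding kalman_rank_def by blast
  have "\<exists>ij. fst ij < m \<and> column k Q = column (snd ij) (matpow A (fst ij) ** B)" for k
    using Q(1) unfolding columns_def by fastforce
  then obtain h where h: "\<And>k. fst (h k) < m"
    and col: "\<And>k. column k Q = column (snd (h k)) (matpow A (fst (h k)) ** B)"
    by metis
  have "kalman_submatrix A B h = Q"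
    using col unfolding column_kalman_submatrix[symmetric] by (simp add: column_def vec_eq_iff)
  with h Q(2) show thesis using that by blast
qed

lemma kalman_rank_full_if_nonsingular_submatrix:
  fixes X :: "real^'n^'n" and B :: "real^'r^'n" and h :: "'n \<Rightarrow> nat \<times> 'r"
  assumes "\<And>k. fst (h k) < m" and "det (kalman_submatrix X B h) \<noteq> 0"
  shows "kalman_rank X B m = CARD('n)"
proof -
  have "columns (kalman_submatrix X B h) \<subseteq> (\<Union>i<m. columns (matpow X i ** B))"
    using assms(1) unfolding columns_def column_kalman_submatrix by fastforce
  then have "rank (kalman_submatrix X B h) \<le> kalman_rank X B m"
    unfolding kalman_rank_def column_rank_def by (rule dim_subset)
  moreover have "rank (kalman_submatrix X B h) = CARD('n)"
    using assms(2) rank_bound[of "kalman_submatrix X B h"] by (simp add: det_eq_0_rank)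
  moreover have "kalman_rank X B m \<le> CARD('n)"
    unfolding kalman_rank_def by (rule dim_subset_UNIV_cart)
  ultimately show ?thesis by simp
qed

lemma real_polynomial_function_det_kalman_submatrix_pencil:
  fixes M A :: "real^'n^'n" and B :: "real^'r^'n" and h :: "'n \<Rightarrow> nat \<times> 'r"
  shows "real_polynomial_function (\<lambda>x. det (kalman_submatrix (x *\<^sub>R M + A) B h))"
  unfolding kalman_submatrix_def
  by (intro real_polynomial_function_det)
    (simp, intro real_polynomial_function_matrix_mult real_polynomial_function_matpow
      real_polynomial_function_pencil_entry real_polynomial_function.intros(2))

lemma finite_kalman_rank_deficient_perturbation:
  fixes A M :: "real^'n^'n" and B :: "real^'r^'n"
  assumes "kalman_rank A B m = CARD('n)"
  shows "finite {g. kalman_rank (M + g *\<^sub>R A) B m \<noteq> CARD('n)}"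
proof -
  obtain h :: "'n \<Rightarrow> nat \<times> 'r" where h: "\<And>k. fst (h k) < m" and "det (kalman_submatrix A B h) \<noteq> 0"
    using obtain_nonsingular_kalman_submatrix assms by blast
  define p where "p x = det (kalman_submatrix (x *\<^sub>R M + A) B h)" for x
  have "p 0 \<noteq> 0"
    unfolding p_def using \<open>det (kalman_submatrix A B h) \<noteq> 0\<close> by simp
  then have "finite {x. p x = 0}"
    unfolding p_def
    by (intro real_polynomial_function_finite_zeros real_polynomial_function_det_kalman_submatrix_pencil)
  moreover have "kalman_rank (M + g *\<^sub>R A) B m = CARD('n)" if "g \<noteq> 0" "p (1 / g) \<noteq> 0" for g
  proof (rule kalman_rank_full_if_nonsingular_submatrix[OF h])
    have "(1 / g) *\<^sub>R M + A = (1 / g) *\<^sub>R (M + g *\<^sub>R A)"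
      using \<open>g \<noteq> 0\<close> by (simp add: scaleR_add_right)
    then show "det (kalman_submatrix (M + g *\<^sub>R A) B h) \<noteq> 0"
      using \<open>p (1 / g) \<noteq> 0\<close> unfolding p_def by (simp add: det_kalman_submatrix_scaleR)
  qed
  then have "{g. kalman_rank (M + g *\<^sub>R A) B m \<noteq> CARD('n)} \<subseteq> insert 0 ((\<lambda>x. 1 / x) ` {x. p x = 0})"
    by (auto intro!: image_eqI[where x = "1 / _"])
  ultimately show ?thesis
    by (meson finite_imageI finite_insert finite_subset)
qed

lemma kalman_rank_le:
  fixes X :: "real^'n^'n" and B :: "real^'r^'n"
  shows "kalman_rank X B k \<le> k * CARD('r)"
proof -
  let ?S = "\<Union>i<k. columns (matpow X i ** B)"
  have columns_eq: "columns (matpow X i ** B) = (\<lambda>j. column j (matpow X i ** B)) ` UNIV" for i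
    unfolding columns_def by auto
  have "card ?S \<le> (\<Sum>i<k. card (columns (matpow X i ** B)))"
    by (rule card_UN_le) simp
  also have "\<dots> \<le> (\<Sum>i<k. CARD('r))"
    by (intro sum_mono) (simp add: columns_eq card_image_le)
  finally have "card ?S \<le> k * CARD('r)" by simp
  moreover have "finite ?S" unfolding columns_eq by auto
  then have "dim ?S \<le> card ?S"
    using dim_le_card[of ?S ?S] by (simp add: span_superset)
  ultimately show ?thesis unfolding kalman_rank_def by simp
qed

lemma kalman_rank_full_at_ctrb_index:
  fixes X :: "real^'n^'n" and B :: "real^'r^'n"
  assumes "controllable X B"
  shows "kalman_rank X B (ctrb_index X B) = CARD('n)"
  using assms unfolding controllable_def ctrb_index_def by (rule LeastI_ex)

lemma controllable_ctrb_index_le_if_kalman_rank_full: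
  fixes X :: "real^'n^'n" and B :: "real^'r^'n"
  assumes "kalman_rank X B k = CARD('n)"
  shows "controllable X B \<and> ctrb_index X B \<le> k"
  using assms unfolding controllable_def ctrb_index_def by (blast intro: Least_le)

lemma ctrb_index_eq_if_kalman_rank_full_square:
  fixes X :: "real^'n^'n" and B :: "real^'r^'n"
  assumes "kalman_rank X B m = CARD('n)" and "m * CARD('r) = CARD('n)"
  shows "ctrb_index X B = m"
  unfolding ctrb_index_def
proof (rule Least_equality)
  show "kalman_rank X B m = CARD('n)" by (fact assms(1))
  show "m \<le> k" if "kalman_rank X B k = CARD('n)" for k
  proof -
    have "m * CARD('r) \<le> k * CARD('r)"
      using kalman_rank_le[of X B k] that assms(2) by simp
    then show ?thesis by simp
  qed
qed

theorem lemma4: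
  fixes A M :: "real^'n^'n" and B :: "real^'r^'n" and m :: nat
  assumes "controllable A B" and "ctrb_index A B = m"
  shows "finite {g::real. \<not> (controllable (M + g *\<^sub>R A) B \<and> ctrb_index (M + g *\<^sub>R A) B \<le> m)} \<and>
         (m * CARD('r) = CARD('n) \<longrightarrow>
         finite {g::real. \<not> (controllable (M + g *\<^sub>R A) B \<and> ctrb_index (M + g *\<^sub>R A) B = m)})"
proof -
  let ?bad = "{g. kalman_rank (M + g *\<^sub>R A) B m \<noteq> CARD('n)}"
  have bad: "finite ?bad"
    using finite_kalman_rank_deficient_perturbation kalman_rank_full_at_ctrb_index assms
    by metis
  show ?thesis
  proof (intro conjI impI)
    show "finite {g. \<not> (controllable (M + g *\<^sub>R A) B \<and> ctrb_index (M + g *\<^sub>R A) B \<le> m)}"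
      by (rule finite_subset[OF _ bad]) (use controllable_ctrb_index_le_if_kalman_rank_full in blast)
    assume "m * CARD('r) = CARD('n)"
    then show "finite {g. \<not> (controllable (M + g *\<^sub>R A) B \<and> ctrb_index (M + g *\<^sub>R A) B = m)}"
      by (intro finite_subset[OF _ bad])
        (use controllable_ctrb_index_le_if_kalman_rank_full ctrb_index_eq_if_kalman_rank_full_square in blast)
  qed
qed

end
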